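(* Let $\rho$ be a density matrix on $\mathbb{C}^d$ and $X$ a $d\times d$ Hermitian matrix. Then $I^s(\rho,X)$ is a monotonically decreasing function of $s\in[-\infty,0]$ and is bounded by the variance: $I^{0}(\rho,X)\le I^{s}(\rho,X)\le I^{t}(\rho,X)\le I^{-\infty}(\rho,X)\le V(\rho,X)$ for all $-\infty\le t\le s\le 0$, where $V(\rho,X)=\mathrm{Tr}[\rho X^\dagger X]-|\mathrm{Tr}[\rho X^\dagger]|^2$. Moreover, if $\rho$ is a pure state, then $I^s(\rho,X)=V(\rho,X)$ for every $s\in[-\infty,0]$.
   Context: Write $\rho=\sum_{i=1}^{d}\lambda_i|\psi_i\rangle\langle\psi_i|$ with $\{|\psi_i\rangle\}$ an orthonormal basis of eigenvectors of $\rho$ and $\lambda_1\ge\cdots\ge\lambda_d\ge 0$. For $-\infty<s<0$ and $a_1,a_2>0$ define $m_s(a_1,a_2)=\left(\frac{a_1^s+a_2^s}{2}\right)^{1/s}$; set $m_0(a_1,a_2)=\sqrt{a_1a_2}$, $m_{-\infty}(a_1,a_2)=\min\{a_1,a_2\}$, and $m_s(a,0)=m_s(0,a)=m_s(0,0)=0$ for all $s\in[-\infty,0]$. Define $\zeta_\rho^s(X,Y)=\mathrm{Tr}[\rho X^\dagger Y]-\sum_{i,j=1}^d m_s(\lambda_i,\lambda_j)\langle\psi_i|X^\dagger|\psi_j\rangle\langle\psi_j|Y|\psi_i\rangle$ and $I^s(\rho,X)=\zeta_\rho^s(X,X)$. *)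

theory Defs
  imports "Jordan_Normal_Form.Schur_Decomposition" "HOL-Library.Extended_Real"
begin

(* Matrices are Jordan_Normal_Form complex matrices of size d x d; complex numbers are
   ordered by HOL-Library.Complex_Order (a \<le> b iff Re a \<le> Re b and Im a = Im b). *)

definition mtrace :: "complex mat \<Rightarrow> complex" where
  "mtrace A = (\<Sum>i<dim_row A. A $$ (i,i))"

definition hermitian_mat :: "nat \<Rightarrow> complex mat \<Rightarrow> bool" where
  "hermitian_mat d A \<longleftrightarrow> A \<in> carrier_mat d d \<and> mat_adjoint A = A"

definition density_matrix :: "nat \<Rightarrow> complex mat \<Rightarrow> bool" where
  "density_matrix d \<rho> \<longleftrightarrow> hermitian_mat d \<rho>
     \<and> (\<forall>v \<in> carrier_vec d. 0 \<le> Re ((\<rho> *\<^sub>v v) \<bullet>c v))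
     \<and> mtrace \<rho> = 1"

definition ket_bra :: "complex vec \<Rightarrow> complex mat" where
  "ket_bra v = mat (dim_vec v) (dim_vec v) (\<lambda>(i,j). v $ i * cnj (v $ j))"

definition pure_state :: "nat \<Rightarrow> complex mat \<Rightarrow> bool" where
  "pure_state d \<rho> \<longleftrightarrow> (\<exists>v \<in> carrier_vec d. v \<bullet>c v = 1 \<and> \<rho> = ket_bra v)"

(* psi_1..psi_d (indexed 0..d-1) orthonormal basis of eigenvectors of rho with
   eigenvalues lam_1 \<ge> ... \<ge> lam_d \<ge> 0 *)
definition eigen_decomposition ::
  "nat \<Rightarrow> complex mat \<Rightarrow> (nat \<Rightarrow> real) \<Rightarrow> (nat \<Rightarrow> complex vec) \<Rightarrow> bool" where
  "eigen_decomposition d \<rho> lam psi \<longleftrightarrow>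
     (\<forall>i<d. psi i \<in> carrier_vec d)
   \<and> (\<forall>i<d. \<forall>j<d. psi i \<bullet>c psi j = (if i = j then 1 else 0))
   \<and> (\<forall>i<d. \<rho> *\<^sub>v psi i = of_real (lam i) \<cdot>\<^sub>v psi i)
   \<and> (\<forall>i j. i \<le> j \<longrightarrow> j < d \<longrightarrow> lam j \<le> lam i)
   \<and> (\<forall>i<d. 0 \<le> lam i)"

definition mean_s :: "ereal \<Rightarrow> real \<Rightarrow> real \<Rightarrow> real" where
  "mean_s s a b =
    (if a = 0 \<or> b = 0 then 0
     else if s = -\<infinity> then min a b
     else if s = 0 then sqrt (a * b)
     else ((a powr real_of_ereal s + b powr real_of_ereal s) / 2) powr (1 / real_of_ereal s))"

definition braket :: "complex vec \<Rightarrow> complex mat \<Rightarrow> complex vec \<Rightarrow> complex" where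
  "braket v M w = (M *\<^sub>v w) \<bullet>c v"

definition zeta_s ::
  "ereal \<Rightarrow> complex mat \<Rightarrow> (nat \<Rightarrow> real) \<Rightarrow> (nat \<Rightarrow> complex vec) \<Rightarrow> complex mat \<Rightarrow> complex mat \<Rightarrow> complex" where
  "zeta_s s \<rho> lam psi X Y =
     mtrace (\<rho> * mat_adjoint X * Y)
   - (\<Sum>i<dim_row \<rho>. \<Sum>j<dim_row \<rho>.
        of_real (mean_s s (lam i) (lam j)) * braket (psi i) (mat_adjoint X) (psi j) * braket (psi j) Y (psi i))"

definition I_s ::
  "ereal \<Rightarrow> complex mat \<Rightarrow> (nat \<Rightarrow> real) \<Rightarrow> (nat \<Rightarrow> complex vec) \<Rightarrow> complex mat \<Rightarrow> complex" where
  "I_s s \<rho> lam psi X = zeta_s s \<rho> lam psi X X"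

definition variance :: "complex mat \<Rightarrow> complex mat \<Rightarrow> complex" where
  "variance \<rho> X = mtrace (\<rho> * mat_adjoint X * X) - of_real ((cmod (mtrace (\<rho> * mat_adjoint X)))\<^sup>2)"

end

theory Submission
  imports Defs "HOL-Analysis.Convex"
begin

text \<open>In the eigenbasis of \<open>\<rho>\<close> one has
  \<open>I\<^sup>s(\<rho>,X) = Tr[\<rho>X\<^sup>\<dagger>X] - \<Sum>\<^sub>i\<^sub>j m\<^sub>s(\<lambda>\<^sub>i,\<lambda>\<^sub>j) |\<langle>\<psi>\<^sub>j|X|\<psi>\<^sub>i\<rangle>|\<^sup>2\<close>,
  so the monotonicity in \<open>s\<close> is that of the power means: for \<open>t < s < 0\<close> it is the concavity
  of \<open>x \<mapsto> x\<^bsup>s/t\<^esup>\<close>, at \<open>s = 0\<close> the AM-GM inequality, and at \<open>t = -\<infinity>\<close> the bound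
  \<open>min \<le> m\<^sub>t\<close>. For the variance bound keep only the diagonal terms, where \<open>m\<^sub>s(\<lambda>,\<lambda>) = \<lambda>\<close>:
  since \<open>\<Sum>\<^sub>i \<lambda>\<^sub>i = 1\<close>, Cauchy-Schwarz gives
  \<open>|Tr[\<rho>X\<^sup>\<dagger>]|\<^sup>2 = |\<Sum>\<^sub>i \<lambda>\<^sub>i \<langle>\<psi>\<^sub>i|X\<^sup>\<dagger>|\<psi>\<^sub>i\<rangle>|\<^sup>2 \<le> \<Sum>\<^sub>i \<lambda>\<^sub>i |\<langle>\<psi>\<^sub>i|X|\<psi>\<^sub>i\<rangle>|\<^sup>2\<close>.
  A pure state has spectrum \<open>(1,0,\<dots>,0)\<close>, and since \<open>m\<^sub>s\<close> vanishes as soon as one argument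
  does, only the term \<open>m\<^sub>s(1,1) |\<langle>\<psi>\<^sub>1|X|\<psi>\<^sub>1\<rangle>|\<^sup>2 = |Tr[\<rho>X\<^sup>\<dagger>]|\<^sup>2\<close> survives.\<close>

lemma powr_average_le_average_powr:
  fixes x y p :: real
  assumes "x > 0" "y > 0" "0 < p" "p < 1"
  shows "(x powr p + y powr p) / 2 \<le> ((x + y) / 2) powr p"
proof -
  define m where "m = (x + y) / 2"
  have m: "m > 0" using assms by (simp add: m_def)
  have Young: "u powr p \<le> p * u + (1 - p)" if "u > 0" for u
    using Youngs_inequality_0[of p "1 - p" u 1] assms that by fastforce
  have "(x/m) powr p + (y/m) powr p \<le> p * (x/m + y/m) + 2 - 2 * p"
    using Young[of "x/m"] Young[of "y/m"] assms m by (simp add: algebra_simps)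
  also have "x/m + y/m = 2"
  proof -
    have "x + y = 2 * m" by (simp add: m_def)
    then show ?thesis using m by (simp add: add_divide_distrib[symmetric])
  qed
  finally have "(x powr p + y powr p) / m powr p \<le> 2"
    using assms m by (simp add: powr_divide add_divide_distrib)
  then show ?thesis using m by (simp add: m_def[symmetric] field_simps)
qed

lemma power_mean_mono:
  fixes a b s t :: real
  assumes "a > 0" "b > 0" "t < s" "s < 0"
  shows "((a powr t + b powr t) / 2) powr (1/t) \<le> ((a powr s + b powr s) / 2) powr (1/s)"
proof -
  define p where "p = s / t"
  have p: "0 < p" "p < 1" using assms by (auto simp: p_def field_simps)
  define x where "x = a powr t"
  define y where "y = b powr t"
  have xy: "x > 0" "y > 0" using assms by (auto simp: x_def y_def)
  have as: "a powr s = x powr p" "b powr s = y powr p"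
    using assms by (auto simp: x_def y_def powr_powr p_def)
  have "(((x + y) / 2) powr p) powr (1/s) \<le> ((x powr p + y powr p) / 2) powr (1/s)"
    using powr_average_le_average_powr[OF xy p] assms xy by (intro powr_mono2') (auto simp: add_pos_pos)
  also have "(((x + y) / 2) powr p) powr (1/s) = ((x + y) / 2) powr (1/t)"
    using assms by (simp add: powr_powr p_def)
  finally show ?thesis by (simp add: as x_def y_def)
qed

lemma power_mean_le_geometric_mean:
  fixes a b s :: real
  assumes "a > 0" "b > 0" "s < 0"
  shows "((a powr s + b powr s) / 2) powr (1/s) \<le> sqrt (a * b)"
proof -
  have "sqrt (a powr s * b powr s) \<le> (a powr s + b powr s) / 2"
    by (rule arith_geo_mean_sqrt) auto
  then have "((a powr s + b powr s) / 2) powr (1/s) \<le> (sqrt (a powr s * b powr s)) powr (1/s)"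
    using assms by (intro powr_mono2') auto
  also have "sqrt (a powr s * b powr s) = (a * b) powr (s/2)"
    using assms by (simp add: powr_half_sqrt_powr powr_mult real_sqrt_mult)
  also have "((a * b) powr (s/2)) powr (1/s) = sqrt (a * b)"
    using assms by (simp add: powr_powr powr_half_sqrt[symmetric])
  finally show ?thesis .
qed

lemma min_le_power_mean:
  fixes a b t :: real
  assumes "a > 0" "b > 0" "t < 0"
  shows "min a b \<le> ((a powr t + b powr t) / 2) powr (1/t)"
proof -
  have m: "min a b > 0" using assms by auto
  have "a powr t \<le> (min a b) powr t" "b powr t \<le> (min a b) powr t"
    using assms m by (auto intro!: powr_mono2')
  then have "((min a b) powr t) powr (1/t) \<le> ((a powr t + b powr t) / 2) powr (1/t)"
    using assms by (intro powr_mono2') (auto intro: add_pos_pos)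
  also have "((min a b) powr t) powr (1/t) = min a b" using assms m by (simp add: powr_powr)
  finally show ?thesis .
qed

lemma mean_s_bounds:
  assumes "a > 0" "b > 0" "s \<le> 0"
  shows "min a b \<le> mean_s s a b" "mean_s s a b \<le> sqrt (a * b)"
proof -
  have min_le_sqrt: "min a b \<le> sqrt (a * b)"
    using assms by (intro real_le_rsqrt) (auto simp: min_def mult_mono power2_eq_square)
  have "min a b \<le> mean_s s a b \<and> mean_s s a b \<le> sqrt (a * b)"
  proof (cases s)
    case (real r)
    then show ?thesis
      using assms min_le_sqrt min_le_power_mean[of a b r] power_mean_le_geometric_mean[of a b r]
      by (cases "r = 0") (auto simp: mean_s_def)
  qed (use assms min_le_sqrt in \<open>auto simp: mean_s_def\<close>)
  then show "min a b \<le> mean_s s a b" "mean_s s a b \<le> sqrt (a * b)" by auto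
qed

lemma mean_s_mono:
  assumes "0 \<le> a" "0 \<le> b" "t \<le> s" "s \<le> 0"
  shows "mean_s t a b \<le> mean_s s a b"
proof (cases "a = 0 \<or> b = 0")
  case True
  then show ?thesis by (simp add: mean_s_def)
next
  case False
  then have ab: "a > 0" "b > 0" using assms by auto
  have t_nonpos: "t \<le> 0" using assms by simp
  consider "t = -\<infinity>" | "s = 0" | r q where "t = ereal r" "s = ereal q" "r \<le> q" "q < 0"
    using assms by (cases t; cases s) (auto simp: less_le)
  then show ?thesis
  proof cases
    case 1
    then show ?thesis using False mean_s_bounds(1)[OF ab assms(4)] by (simp add: mean_s_def)
  next
    case 2
    then show ?thesis using False mean_s_bounds(2)[OF ab t_nonpos] by (simp add: mean_s_def)
  next
    case 3
    then show ?thesis using False ab power_mean_mono[of a b r q]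
      by (cases "r = q") (auto simp: mean_s_def)
  qed
qed

lemma mean_s_same:
  assumes "0 \<le> a" "s \<le> 0"
  shows "mean_s s a a = a"
  using assms by (cases "a = 0"; cases s) (auto simp: mean_s_def powr_powr)

lemma mean_s_nonneg: "0 \<le> a \<Longrightarrow> 0 \<le> b \<Longrightarrow> 0 \<le> mean_s s a b"
  by (auto simp: mean_s_def)

lemma cscalar_prod_sum:
  fixes v w :: "complex vec"
  assumes "v \<in> carrier_vec n" "w \<in> carrier_vec n"
  shows "v \<bullet>c w = (\<Sum>k<n. v$k * cnj (w$k))"
  using assms by (simp add: scalar_prod_def atLeast0LessThan)

lemma cscalar_prod_swap:
  fixes v w :: "complex vec"
  assumes "v \<in> carrier_vec n" "w \<in> carrier_vec n"
  shows "v \<bullet>c w = cnj (w \<bullet>c v)"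
  using assms by (simp add: cscalar_prod_sum[OF assms] cscalar_prod_sum[OF assms(2,1)] mult.commute)

lemma index_mult_mat_vec_sum:
  fixes M :: "complex mat"
  assumes "M \<in> carrier_mat n n" "w \<in> carrier_vec n" "k < n"
  shows "(M *\<^sub>v w) $ k = (\<Sum>l<n. M$$(k,l) * w$l)"
  using assms by (simp add: mult_mat_vec_def scalar_prod_def atLeast0LessThan)

lemma braket_sum:
  fixes M :: "complex mat"
  assumes "M \<in> carrier_mat n n" "v \<in> carrier_vec n" "w \<in> carrier_vec n"
  shows "braket v M w = (\<Sum>k<n. (\<Sum>l<n. M$$(k,l) * w$l) * cnj (v$k))"
proof -
  have "braket v M w = (\<Sum>k<n. (M *\<^sub>v w)$k * cnj (v$k))"
    unfolding braket_def using assms by (simp add: cscalar_prod_sum[of _ n])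
  also have "\<dots> = (\<Sum>k<n. (\<Sum>l<n. M$$(k,l) * w$l) * cnj (v$k))"
    by (intro sum.cong refl) (simp add: index_mult_mat_vec_sum[OF assms(1,3)])
  finally show ?thesis .
qed

lemma mat_adjoint_carrier:
  fixes A :: "complex mat"
  assumes "A \<in> carrier_mat n n"
  shows "mat_adjoint A \<in> carrier_mat n n"
  using assms unfolding mat_adjoint_def carrier_mat_def by (simp add: mat_of_rows_def)

lemma index_mat_adjoint:
  fixes A :: "complex mat"
  assumes "A \<in> carrier_mat n n" "i < n" "j < n"
  shows "mat_adjoint A $$ (i,j) = cnj (A $$ (j,i))"
  using assms by (simp add: mat_adjoint_def mat_of_rows_def)

lemma braket_mat_adjoint:
  fixes X :: "complex mat"
  assumes "X \<in> carrier_mat n n" "v \<in> carrier_vec n" "w \<in> carrier_vec n"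
  shows "braket v (mat_adjoint X) w = cnj (braket w X v)"
proof -
  have "braket v (mat_adjoint X) w = (\<Sum>k<n. \<Sum>l<n. cnj (X$$(l,k)) * w$l * cnj (v$k))"
    using assms
    by (simp add: braket_sum[OF mat_adjoint_carrier[OF assms(1)]] index_mat_adjoint sum_distrib_right)
  also have "\<dots> = (\<Sum>l<n. \<Sum>k<n. cnj (X$$(l,k)) * w$l * cnj (v$k))"
    by (rule sum.swap)
  also have "\<dots> = cnj (braket w X v)"
    using assms by (simp add: braket_sum sum_distrib_right sum_distrib_left mult_ac)
  finally show ?thesis .
qed

lemma mtrace_mult_comm:
  fixes A B :: "complex mat"
  assumes "A \<in> carrier_mat n m" "B \<in> carrier_mat m n"
  shows "mtrace (A * B) = mtrace (B * A)"
proof -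
  have "mtrace (A * B) = (\<Sum>i<n. \<Sum>k<m. A$$(i,k) * B$$(k,i))"
    using assms by (simp add: mtrace_def scalar_prod_def atLeast0LessThan)
  also have "\<dots> = (\<Sum>k<m. \<Sum>i<n. B$$(k,i) * A$$(i,k))"
    by (subst sum.swap) (simp add: mult.commute)
  also have "\<dots> = mtrace (B * A)"
    using assms by (simp add: mtrace_def scalar_prod_def atLeast0LessThan)
  finally show ?thesis .
qed

text \<open>The square matrix with orthonormal columns \<open>\<psi>\<^sub>i\<close> is unitary, so its rows are
  orthonormal as well.\<close>

lemma orthonormal_basis_completeness:
  fixes psi :: "nat \<Rightarrow> complex vec"
  assumes car: "\<forall>i<d. psi i \<in> carrier_vec d"
    and orth: "\<forall>i<d. \<forall>j<d. psi i \<bullet>c psi j = (if i = j then 1 else 0)"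
    and "l < d" "k < d"
  shows "(\<Sum>i<d. psi i $ l * cnj (psi i $ k)) = (if l = k then 1 else 0)"
proof -
  define U :: "complex mat" where "U = mat d d (\<lambda>(k,i). psi i $ k)"
  define Uh :: "complex mat" where "Uh = mat d d (\<lambda>(i,k). cnj (psi i $ k))"
  have U: "U \<in> carrier_mat d d" and Uh: "Uh \<in> carrier_mat d d" by (auto simp: U_def Uh_def)
  have "Uh * U = 1\<^sub>m d"
  proof (rule eq_matI)
    fix i j assume ij: "i < dim_row (1\<^sub>m d :: complex mat)" "j < dim_col (1\<^sub>m d :: complex mat)"
    then have "(Uh * U) $$ (i,j) = (\<Sum>k<d. psi j $ k * cnj (psi i $ k))"
      by (simp add: U_def Uh_def scalar_prod_def atLeast0LessThan mult.commute)
    also have "\<dots> = psi j \<bullet>c psi i" using car ij by (simp add: cscalar_prod_sum[of _ d])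
    finally have "(Uh * U) $$ (i,j) = psi j \<bullet>c psi i" .
    then show "(Uh * U) $$ (i,j) = 1\<^sub>m d $$ (i,j)" using orth ij by auto
  qed (auto simp: U_def Uh_def)
  then have "U * Uh = 1\<^sub>m d" by (rule mat_mult_left_right_inverse[OF Uh U])
  moreover have "(U * Uh) $$ (l,k) = (\<Sum>i<d. psi i $ l * cnj (psi i $ k))"
    using assms by (simp add: U_def Uh_def scalar_prod_def atLeast0LessThan)
  ultimately show ?thesis using assms by simp
qed

lemma mtrace_eq_sum_braket:
  fixes A :: "complex mat"
  assumes car: "\<forall>i<d. psi i \<in> carrier_vec d"
    and orth: "\<forall>i<d. \<forall>j<d. psi i \<bullet>c psi j = (if i = j then 1 else 0)"
    and A: "A \<in> carrier_mat d d"
  shows "mtrace A = (\<Sum>i<d. braket (psi i) A (psi i))"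
proof -
  have "(\<Sum>i<d. braket (psi i) A (psi i))
      = (\<Sum>i<d. \<Sum>k<d. \<Sum>l<d. A$$(k,l) * (psi i $ l * cnj (psi i $ k)))"
    using car A by (simp add: braket_sum sum_distrib_right sum_distrib_left mult_ac)
  also have "\<dots> = (\<Sum>k<d. \<Sum>l<d. A$$(k,l) * (\<Sum>i<d. psi i $ l * cnj (psi i $ k)))"
    by (subst sum.swap, rule sum.cong[OF refl], subst sum.swap) (simp add: sum_distrib_left)
  also have "\<dots> = (\<Sum>k<d. A$$(k,k))"
    using car orth by (simp add: orthonormal_basis_completeness if_distrib cong: if_cong)
  finally show ?thesis using A by (simp add: mtrace_def)
qed

definition transition_mean_sum ::
  "ereal \<Rightarrow> nat \<Rightarrow> (nat \<Rightarrow> real) \<Rightarrow> (nat \<Rightarrow> complex vec) \<Rightarrow> complex mat \<Rightarrow> real" where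
  "transition_mean_sum s d lam psi X =
     (\<Sum>i<d. \<Sum>j<d. mean_s s (lam i) (lam j) * (cmod (braket (psi j) X (psi i)))\<^sup>2)"

lemma I_s_eq_trace_minus_transition_mean_sum:
  assumes "\<rho> \<in> carrier_mat d d" "X \<in> carrier_mat d d" "\<forall>i<d. psi i \<in> carrier_vec d"
  shows "I_s s \<rho> lam psi X
    = mtrace (\<rho> * mat_adjoint X * X) - of_real (transition_mean_sum s d lam psi X)"
proof -
  have "braket (psi i) (mat_adjoint X) (psi j) * braket (psi j) X (psi i)
      = of_real ((cmod (braket (psi j) X (psi i)))\<^sup>2)" if "i < d" "j < d" for i j
    using that assms
    by (simp add: braket_mat_adjoint complex_norm_square mult.commute del: of_real_power)
  then show ?thesis
    using assms(1) by (simp add: I_s_def zeta_s_def transition_mean_sum_def mult.assoc)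
qed

lemma mtrace_mult_adjoint_eigenbasis:
  assumes "\<rho> \<in> carrier_mat d d" "X \<in> carrier_mat d d" "eigen_decomposition d \<rho> lam psi"
  shows "mtrace (\<rho> * mat_adjoint X) = (\<Sum>i<d. of_real (lam i) * cnj (braket (psi i) X (psi i)))"
proof -
  have car: "\<forall>i<d. psi i \<in> carrier_vec d"
    and orth: "\<forall>i<d. \<forall>j<d. psi i \<bullet>c psi j = (if i = j then 1 else 0)"
    and eig: "\<And>i. i < d \<Longrightarrow> \<rho> *\<^sub>v psi i = of_real (lam i) \<cdot>\<^sub>v psi i"
    using assms(3) by (auto simp: eigen_decomposition_def)
  have Xa: "mat_adjoint X \<in> carrier_mat d d" using assms(2) by (rule mat_adjoint_carrier)
  have "braket (psi i) (mat_adjoint X * \<rho>) (psi i) = of_real (lam i) * cnj (braket (psi i) X (psi i))"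
    if i: "i < d" for i
  proof -
    have "(mat_adjoint X * \<rho>) *\<^sub>v psi i = of_real (lam i) \<cdot>\<^sub>v (mat_adjoint X *\<^sub>v psi i)"
      using Xa assms(1) car eig i by (auto simp: mult_mat_vec)
    then have "braket (psi i) (mat_adjoint X * \<rho>) (psi i)
        = of_real (lam i) * braket (psi i) (mat_adjoint X) (psi i)"
      unfolding braket_def using Xa car i by (auto simp: smult_scalar_prod_distrib)
    then show ?thesis using assms(2) car i by (simp add: braket_mat_adjoint)
  qed
  moreover have "mtrace (\<rho> * mat_adjoint X) = (\<Sum>i<d. braket (psi i) (mat_adjoint X * \<rho>) (psi i))"
    using mtrace_mult_comm[OF assms(1) Xa] mtrace_eq_sum_braket[OF car orth] Xa assms(1) by simp
  ultimately show ?thesis by simp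
qed

lemma sum_eigenvalues_density_matrix:
  assumes "density_matrix d \<rho>" "eigen_decomposition d \<rho> lam psi"
  shows "(\<Sum>i<d. lam i) = 1"
proof -
  have \<rho>: "\<rho> \<in> carrier_mat d d" "mtrace \<rho> = 1"
    using assms(1) by (auto simp: density_matrix_def hermitian_mat_def)
  have car: "\<forall>i<d. psi i \<in> carrier_vec d"
    and orth: "\<forall>i<d. \<forall>j<d. psi i \<bullet>c psi j = (if i = j then 1 else 0)"
    and eig: "\<And>i. i < d \<Longrightarrow> \<rho> *\<^sub>v psi i = of_real (lam i) \<cdot>\<^sub>v psi i"
    using assms(2) by (auto simp: eigen_decomposition_def)
  have "complex_of_real (\<Sum>i<d. lam i) = (\<Sum>i<d. braket (psi i) \<rho> (psi i))"
    using car orth eig by (simp add: braket_def)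
  also have "\<dots> = 1" using \<rho> car orth by (simp add: mtrace_eq_sum_braket[symmetric])
  finally show ?thesis by (metis of_real_eq_1_iff)
qed

lemma transition_mean_sum_mono:
  assumes "\<forall>i<d. 0 \<le> lam i" "t \<le> s" "s \<le> 0"
  shows "transition_mean_sum t d lam psi X \<le> transition_mean_sum s d lam psi X"
  unfolding transition_mean_sum_def
  using assms by (intro sum_mono mult_right_mono mean_s_mono) auto

lemma diagonal_le_transition_mean_sum:
  assumes "\<forall>i<d. 0 \<le> lam i" "s \<le> 0"
  shows "(\<Sum>i<d. lam i * (cmod (braket (psi i) X (psi i)))\<^sup>2) \<le> transition_mean_sum s d lam psi X"
  unfolding transition_mean_sum_def
proof (intro sum_mono)
  fix i assume i: "i \<in> {..<d}"
  have "lam i * (cmod (braket (psi i) X (psi i)))\<^sup>2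
      = mean_s s (lam i) (lam i) * (cmod (braket (psi i) X (psi i)))\<^sup>2"
    using mean_s_same assms i by simp
  also have "\<dots> \<le> (\<Sum>j<d. mean_s s (lam i) (lam j) * (cmod (braket (psi j) X (psi i)))\<^sup>2)"
    using i assms mean_s_nonneg
    by (intro member_le_sum[where f = "\<lambda>j. mean_s s (lam i) (lam j) * (cmod (braket (psi j) X (psi i)))\<^sup>2"])
      auto
  finally show "lam i * (cmod (braket (psi i) X (psi i)))\<^sup>2
      \<le> (\<Sum>j<d. mean_s s (lam i) (lam j) * (cmod (braket (psi j) X (psi i)))\<^sup>2)" .
qed

lemma cmod_convex_combination_sq_le:
  assumes "\<forall>i\<in>A. 0 \<le> l i" "sum l A = 1"
  shows "(cmod (\<Sum>i\<in>A. of_real (l i) * z i))\<^sup>2 \<le> (\<Sum>i\<in>A. l i * (cmod (z i))\<^sup>2)"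
proof -
  have "cmod (\<Sum>i\<in>A. of_real (l i) * z i) \<le> (\<Sum>i\<in>A. sqrt (l i) * (sqrt (l i) * cmod (z i)))"
    using assms(1) by (intro order_trans[OF norm_sum] sum_mono) (auto simp: norm_mult mult.assoc[symmetric])
  then have "(cmod (\<Sum>i\<in>A. of_real (l i) * z i))\<^sup>2
      \<le> (\<Sum>i\<in>A. sqrt (l i) * (sqrt (l i) * cmod (z i)))\<^sup>2"
    by (intro power_mono) auto
  also have "\<dots> \<le> (\<Sum>i\<in>A. (sqrt (l i))\<^sup>2) * (\<Sum>i\<in>A. (sqrt (l i) * cmod (z i))\<^sup>2)"
    by (rule Cauchy_Schwarz_ineq_sum)
  also have "\<dots> = (\<Sum>i\<in>A. l i * (cmod (z i))\<^sup>2)"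
    using assms by (simp add: power_mult_distrib)
  finally show ?thesis .
qed

lemma I_s_antimono:
  assumes "\<rho> \<in> carrier_mat d d" "X \<in> carrier_mat d d" "eigen_decomposition d \<rho> lam psi"
    and "t \<le> s" "s \<le> 0"
  shows "I_s s \<rho> lam psi X \<le> I_s t \<rho> lam psi X"
  using assms transition_mean_sum_mono[of d lam t s psi X]
  by (simp add: I_s_eq_trace_minus_transition_mean_sum eigen_decomposition_def less_eq_complex_def)

lemma I_s_le_variance:
  assumes "density_matrix d \<rho>" "X \<in> carrier_mat d d" "eigen_decomposition d \<rho> lam psi" "s \<le> 0"
  shows "I_s s \<rho> lam psi X \<le> variance \<rho> X"
proof -
  have \<rho>: "\<rho> \<in> carrier_mat d d" using assms(1) by (simp add: density_matrix_def hermitian_mat_def)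
  have lam: "\<forall>i<d. 0 \<le> lam i" using assms(3) by (simp add: eigen_decomposition_def)
  have "(cmod (mtrace (\<rho> * mat_adjoint X)))\<^sup>2
      = (cmod (\<Sum>i<d. of_real (lam i) * cnj (braket (psi i) X (psi i))))\<^sup>2"
    using \<rho> assms(2,3) by (simp add: mtrace_mult_adjoint_eigenbasis)
  also have "\<dots> \<le> (\<Sum>i<d. lam i * (cmod (braket (psi i) X (psi i)))\<^sup>2)"
    using cmod_convex_combination_sq_le[of "{..<d}" lam "\<lambda>i. cnj (braket (psi i) X (psi i))"]
      lam sum_eigenvalues_density_matrix[OF assms(1,3)] by simp
  also have "\<dots> \<le> transition_mean_sum s d lam psi X"
    using lam assms(4) by (rule diagonal_le_transition_mean_sum)
  finally show ?thesis
    using \<rho> assms(2,3)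
    by (simp add: I_s_eq_trace_minus_transition_mean_sum eigen_decomposition_def variance_def
        less_eq_complex_def)
qed

lemma ket_bra_mult_vec:
  assumes "v \<in> carrier_vec n" "w \<in> carrier_vec n"
  shows "ket_bra v *\<^sub>v w = (w \<bullet>c v) \<cdot>\<^sub>v v"
proof (rule eq_vecI)
  fix k assume "k < dim_vec ((w \<bullet>c v) \<cdot>\<^sub>v v)"
  then have k: "k < n" using assms by simp
  have "ket_bra v \<in> carrier_mat n n" using assms by (simp add: ket_bra_def)
  then have "(ket_bra v *\<^sub>v w) $ k = (\<Sum>l<n. v$k * cnj (v$l) * w$l)"
    using assms k by (simp add: ket_bra_def scalar_prod_def atLeast0LessThan)
  also have "\<dots> = v$k * (w \<bullet>c v)"
    using assms by (simp add: cscalar_prod_sum[of _ n] sum_distrib_left mult_ac)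
  finally show "(ket_bra v *\<^sub>v w) $ k = ((w \<bullet>c v) \<cdot>\<^sub>v v) $ k" using assms k by simp
qed (use assms in \<open>simp add: ket_bra_def\<close>)

text \<open>With \<open>\<alpha>\<^sub>i = \<langle>v|\<psi>\<^sub>i\<rangle>\<close> one has \<open>\<langle>\<psi>\<^sub>j|v\<rangle>\<langle>v|\<psi>\<^sub>i\<rangle> = \<alpha>\<^sub>i \<alpha>\<^sub>j\<^sup>* = \<lambda>\<^sub>i \<delta>\<^sub>i\<^sub>j\<close>,
  hence \<open>\<lambda>\<^sub>i = |\<alpha>\<^sub>i|\<^sup>2\<close> and \<open>\<lambda>\<^sub>i \<lambda>\<^sub>j = |\<alpha>\<^sub>i \<alpha>\<^sub>j\<^sup>*|\<^sup>2 = 0\<close> for \<open>i \<noteq> j\<close>.\<close>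

lemma ket_bra_eigenvalue_products:
  assumes v: "v \<in> carrier_vec d" and eigen: "eigen_decomposition d (ket_bra v) lam psi"
    and "i < d" "j < d" "i \<noteq> j"
  shows "lam i * lam j = 0"
proof -
  define \<alpha> where "\<alpha> i = psi i \<bullet>c v" for i
  have car: "\<forall>i<d. psi i \<in> carrier_vec d"
    and orth: "\<forall>i<d. \<forall>j<d. psi i \<bullet>c psi j = (if i = j then 1 else 0)"
    and eig: "\<And>i. i < d \<Longrightarrow> ket_bra v *\<^sub>v psi i = of_real (lam i) \<cdot>\<^sub>v psi i"
    using eigen by (auto simp: eigen_decomposition_def)
  have \<alpha>: "\<alpha> i * cnj (\<alpha> j) = of_real (lam i) * (if i = j then 1 else 0)"
    if "i < d" "j < d" for i j
  proof -
    have "\<alpha> i * cnj (\<alpha> j) = (ket_bra v *\<^sub>v psi i) \<bullet>c psi j"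
      using v car that
      by (simp add: \<alpha>_def ket_bra_mult_vec cscalar_prod_swap[of v d "psi j"])
    also have "\<dots> = of_real (lam i) * (psi i \<bullet>c psi j)"
      using eig car that by (auto intro: smult_scalar_prod_distrib[of _ d])
    finally show ?thesis using orth that by simp
  qed
  have "complex_of_real (lam i * lam j) = (\<alpha> i * cnj (\<alpha> i)) * (\<alpha> j * cnj (\<alpha> j))"
    using \<alpha>[of i i] \<alpha>[of j j] assms(3,4) by simp
  also have "\<dots> = (\<alpha> i * cnj (\<alpha> j)) * (\<alpha> j * cnj (\<alpha> i))"
    by (simp add: mult_ac)
  also have "\<dots> = 0" using \<alpha>[of i j] assms(3-5) by simp
  finally show ?thesis by simp
qed

lemma single_support_of_sum_eq_one:
  fixes f :: "nat \<Rightarrow> real"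
  assumes sum: "(\<Sum>i<d. f i) = 1" and disjoint: "\<And>i j. i < d \<Longrightarrow> j < d \<Longrightarrow> i \<noteq> j \<Longrightarrow> f i * f j = 0"
  obtains k where "k < d" "\<And>i. i < d \<Longrightarrow> f i = (if i = k then 1 else 0)"
proof -
  obtain k where k: "k < d" "f k \<noteq> 0"
    using sum by (metis lessThan_iff sum.neutral zero_neq_one)
  have others: "f i = 0" if "i < d" "i \<noteq> k" for i
    using disjoint[OF that(1) k(1) that(2)] k(2) by simp
  have "(\<Sum>i<d. f i) = f k + (\<Sum>i\<in>{..<d} - {k}. f i)"
    using k by (simp add: sum.remove)
  also have "(\<Sum>i\<in>{..<d} - {k}. f i) = 0" using others by (intro sum.neutral) auto
  finally have "f k = 1" using sum by simp
  then show ?thesis using that k(1) others by auto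
qed

lemma pure_state_eigenvalues:
  assumes "pure_state d \<rho>" "density_matrix d \<rho>" "eigen_decomposition d \<rho> lam psi"
  obtains k where "k < d" "\<And>i. i < d \<Longrightarrow> lam i = (if i = k then 1 else 0)"
proof -
  obtain v where "v \<in> carrier_vec d" "\<rho> = ket_bra v"
    using assms(1) by (auto simp: pure_state_def)
  then show ?thesis
    using single_support_of_sum_eq_one[OF sum_eigenvalues_density_matrix[OF assms(2,3)]]
      ket_bra_eigenvalue_products assms(3) that by blast
qed

lemma I_s_pure_state:
  assumes "pure_state d \<rho>" "density_matrix d \<rho>" "X \<in> carrier_mat d d"
    and "eigen_decomposition d \<rho> lam psi" "s \<le> 0"
  shows "I_s s \<rho> lam psi X = variance \<rho> X"
proof -
  obtain k where k: "k < d" and lam: "\<And>i. i < d \<Longrightarrow> lam i = (if i = k then 1 else 0)"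
    using pure_state_eigenvalues[OF assms(1,2,4)] by blast
  have \<rho>: "\<rho> \<in> carrier_mat d d" using assms(2) by (simp add: density_matrix_def hermitian_mat_def)
  have mean: "mean_s s (lam i) (lam j) * c = (if j = k then if i = k then c else 0 else 0)"
    if "i < d" "j < d" for i j c
    using lam[OF that(1)] lam[OF that(2)] mean_s_same[of 1 s] assms(5)
    by (auto simp del: mean_s_same simp: mean_s_def)
  have "transition_mean_sum s d lam psi X = (cmod (braket (psi k) X (psi k)))\<^sup>2"
    using k by (simp add: transition_mean_sum_def mean)
  moreover have "mtrace (\<rho> * mat_adjoint X) = cnj (braket (psi k) X (psi k))"
  proof -
    have "complex_of_real (lam i) * c = (if i = k then c else 0)" if "i < d" for i c
      using lam[OF that] by simp
    then show ?thesis using \<rho> assms(3,4) k by (simp add: mtrace_mult_adjoint_eigenbasis)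
  qed
  ultimately show ?thesis
    using \<rho> assms(3,4)
    by (simp add: I_s_eq_trace_minus_transition_mean_sum eigen_decomposition_def variance_def)
qed

theorem theorem2:
  fixes d :: nat and \<rho> X :: "complex mat" and lam :: "nat \<Rightarrow> real"
    and psi :: "nat \<Rightarrow> complex vec" and s t :: ereal
  assumes "density_matrix d \<rho>"
    and "hermitian_mat d X"
    and "eigen_decomposition d \<rho> lam psi"
    and "-\<infinity> \<le> t" and "t \<le> s" and "s \<le> 0"
  shows "I_s 0 \<rho> lam psi X \<le> I_s s \<rho> lam psi X
       \<and> I_s s \<rho> lam psi X \<le> I_s t \<rho> lam psi X
       \<and> I_s t \<rho> lam psi X \<le> I_s (-\<infinity>) \<rho> lam psi X
       \<and> I_s (-\<infinity>) \<rho> lam psi X \<le> variance \<rho> X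
       \<and> (pure_state d \<rho> \<longrightarrow> (\<forall>u::ereal. u \<le> 0 \<longrightarrow> I_s u \<rho> lam psi X = variance \<rho> X))"
proof -
  have \<rho>: "\<rho> \<in> carrier_mat d d" using assms(1) by (simp add: density_matrix_def hermitian_mat_def)
  have X: "X \<in> carrier_mat d d" using assms(2) by (simp add: hermitian_mat_def)
  have "t \<le> 0" using assms(5,6) by (rule order_trans)
  then show ?thesis
    using I_s_antimono[OF \<rho> X assms(3)] I_s_le_variance[OF assms(1) X assms(3), of "-\<infinity>"]
      I_s_pure_state[OF _ assms(1) X assms(3)] assms(4-6)
    by auto
qed

end
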